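(* Let $\mathcal{X},\mathcal{Y}$ be separable Hilbert spaces and $K:\mathcal{X}\to\mathcal{Y}$ a compact linear operator with Moore–Penrose generalised inverse $K^+$ (domain $\mathcal{D}(K^+)$). Let $Y_1,Y_2,\dots$ be independent, identically distributed $\mathcal{Y}$-valued random variables with $\mathbb{E}[Y_1]=\hat y\in\mathcal{D}(K^+)$ and $0<\mathbb{E}\|Y_1\|^2<\infty$. Let $(R_\alpha)_{\alpha>0}$ be a regularisation together with an a priori parameter choice $\delta\mapsto\alpha(\delta)>0$ such that $\alpha(\delta)\to0$ and $\|R_{\alpha(\delta)}\|\,\delta\to0$ as $\delta\to0$. Set $\bar Y_n:=\frac1n\sum_{i\le n}Y_i$ and $\delta_n^{est}:=n^{-1/2}$. Then $$\lim_{n\to\infty}\mathbb{E}\,\big\|R_{\alpha(\delta_n^{est})}\bar Y_n-K^+\hat y\big\|^2=0.$$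
   Context: A regularisation is a family $(R_\alpha)_{\alpha>0}$ of bounded linear operators $R_\alpha:\mathcal{Y}\to\mathcal{X}$ such that $R_\alpha y\to K^+y$ as $\alpha\to0$ for every $y\in\mathcal{D}(K^+)$. An a priori parameter choice is a map $\alpha:(0,\infty)\to(0,\infty)$ depending only on the noise level $\delta$ (not on the data). *)

theory Defs
  imports "HOL-Probability.Probability"
begin

definition orth_compl :: "'a::real_inner set \<Rightarrow> 'a set" where
  "orth_compl S = {x. \<forall>s\<in>S. inner x s = 0}"

definition compact_op :: "('a::real_normed_vector \<Rightarrow>\<^sub>L 'b::real_normed_vector) \<Rightarrow> bool" where
  "compact_op K \<longleftrightarrow> compact (closure (blinfun_apply K ` cball 0 1))"

text \<open>Domain of the Moore--Penrose inverse: D(K^+) = R(K) + R(K)^perp.\<close>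
definition mp_dom :: "('a::real_inner \<Rightarrow>\<^sub>L 'b::real_inner) \<Rightarrow> 'b set" where
  "mp_dom K = {y. \<exists>x. y - blinfun_apply K x \<in> orth_compl (range (blinfun_apply K))}"

text \<open>Moore--Penrose inverse on its domain: K^+ y is the unique x in N(K)^perp with
  y - K x in R(K)^perp (i.e. K x = Q y, Q the projection onto the closure of R(K)).\<close>
definition mp_inv :: "('a::real_inner \<Rightarrow>\<^sub>L 'b::real_inner) \<Rightarrow> 'b \<Rightarrow> 'a" where
  "mp_inv K y = (THE x. x \<in> orth_compl {z. blinfun_apply K z = 0}
                   \<and> y - blinfun_apply K x \<in> orth_compl (range (blinfun_apply K)))"

definition is_regularisation ::
  "('a::real_inner \<Rightarrow>\<^sub>L 'b::real_inner) \<Rightarrow> (real \<Rightarrow> ('b \<Rightarrow>\<^sub>L 'a)) \<Rightarrow> bool" where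
  "is_regularisation K R \<longleftrightarrow>
     (\<forall>y\<in>mp_dom K. ((\<lambda>\<alpha>. blinfun_apply (R \<alpha>) y) \<longlongrightarrow> mp_inv K y) (at_right 0))"

end

(* With T = R (alpha (n^(-1/2))), the error splits into a variance and a bias term:
     ||T Ybar_n - K^+ yhat||^2 <= 2 ||T||^2 ||Ybar_n - yhat||^2 + 2 ||T yhat - K^+ yhat||^2.
   Independence makes the centred Y_i orthogonal in L^2, so E ||Ybar_n - yhat||^2 = sigma^2 / n
   and the variance term is 2 sigma^2 (||T|| n^(-1/2))^2, which vanishes by the parameter choice.
   The bias term vanishes because R is a regularisation and alpha (n^(-1/2)) tends to 0 from the right. *)

theory Submission imports Defs "HOL-Real_Asymp.Real_Asymp" begin

lemma norm_add_squared_le: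
  fixes u v :: "'a::real_normed_vector"
  shows "(norm (u + v))\<^sup>2 \<le> 2 * (norm u)\<^sup>2 + 2 * (norm v)\<^sup>2"
proof -
  have "(norm (u + v))\<^sup>2 \<le> (norm u + norm v)\<^sup>2"
    by (simp add: power_mono norm_triangle_ineq)
  also have "\<dots> \<le> 2 * (norm u)\<^sup>2 + 2 * (norm v)\<^sup>2"
    using sum_squares_bound[of "norm u" "norm v"] by (simp add: power2_sum)
  finally show ?thesis .
qed

lemma integrable_inner_if_square_integrable:
  fixes X Z :: "'a \<Rightarrow> 'b::{real_inner, second_countable_topology}"
  assumes [measurable]: "X \<in> borel_measurable M" "Z \<in> borel_measurable M"
    and "integrable M (\<lambda>\<omega>. (norm (X \<omega>))\<^sup>2)" "integrable M (\<lambda>\<omega>. (norm (Z \<omega>))\<^sup>2)"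
  shows "integrable M (\<lambda>\<omega>. inner (X \<omega>) (Z \<omega>))"
proof (rule Bochner_Integration.integrable_bound)
  show "integrable M (\<lambda>\<omega>. (norm (X \<omega>))\<^sup>2 + (norm (Z \<omega>))\<^sup>2)"
    using assms by (intro Bochner_Integration.integrable_add)
  show "AE \<omega> in M. norm (inner (X \<omega>) (Z \<omega>)) \<le> norm ((norm (X \<omega>))\<^sup>2 + (norm (Z \<omega>))\<^sup>2)"
  proof (intro AE_I2)
    fix \<omega>
    have "\<bar>inner (X \<omega>) (Z \<omega>)\<bar> \<le> norm (X \<omega>) * norm (Z \<omega>)"
      by (rule Cauchy_Schwarz_ineq2)
    also have "\<dots> \<le> (norm (X \<omega>))\<^sup>2 + (norm (Z \<omega>))\<^sup>2"
      using sum_squares_bound[of "norm (X \<omega>)" "norm (Z \<omega>)"]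
        mult_nonneg_nonneg[OF norm_ge_zero norm_ge_zero, of "X \<omega>" "Z \<omega>"] by linarith
    finally show "norm (inner (X \<omega>) (Z \<omega>)) \<le> norm ((norm (X \<omega>))\<^sup>2 + (norm (Z \<omega>))\<^sup>2)"
      by simp
  qed
qed measurable

lemma identically_distributed_integrable_iff:
  fixes f :: "'b::topological_space \<Rightarrow> real"
  assumes "X \<in> borel_measurable M" "Z \<in> borel_measurable M"
    and "distr M borel X = distr M borel Z" "f \<in> borel_measurable borel"
  shows "integrable M (\<lambda>\<omega>. f (X \<omega>)) \<longleftrightarrow> integrable M (\<lambda>\<omega>. f (Z \<omega>))"
  using assms integrable_distr_eq[of X M borel f] integrable_distr_eq[of Z M borel f] by simp

lemma identically_distributed_integral_eq:
  fixes f :: "'b::topological_space \<Rightarrow> real"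
  assumes "X \<in> borel_measurable M" "Z \<in> borel_measurable M"
    and "distr M borel X = distr M borel Z" "f \<in> borel_measurable borel"
  shows "(\<integral>\<omega>. f (X \<omega>) \<partial>M) = (\<integral>\<omega>. f (Z \<omega>) \<partial>M)"
  using assms integral_distr[of X M borel f] integral_distr[of Z M borel f] by simp

lemma (in prob_space) indep_vars_imp_indep_var:
  assumes "indep_vars M' X I" "i \<in> I" "j \<in> I" "i \<noteq> j"
  shows "indep_var (M' i) (X i) (M' j) (X j)"
proof -
  have "indep_var (M' i) ((\<lambda>f. f i) \<circ> (\<lambda>\<omega>. restrict (\<lambda>k. X k \<omega>) {i}))
                  (M' j) ((\<lambda>f. f j) \<circ> (\<lambda>\<omega>. restrict (\<lambda>k. X k \<omega>) {j}))"
    using assms by (intro indep_var_compose[OF indep_var_restrict[OF assms(1)]]) auto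
  then show ?thesis
    by (simp add: comp_def)
qed

text \<open>Mean zero is stated weakly, through inner products: the Bochner-integral lemmas for
  image measures require sort banach, which {real_inner, complete_space} does not provide.\<close>

lemma (in prob_space) integral_inner_indep_eq_0:
  fixes X Z :: "'a \<Rightarrow> 'b::{real_inner, complete_space, second_countable_topology}"
  assumes ind: "indep_var borel X borel Z"
    and sq: "integrable M (\<lambda>\<omega>. (norm (X \<omega>))\<^sup>2)" "integrable M (\<lambda>\<omega>. (norm (Z \<omega>))\<^sup>2)"
    and mean: "\<And>v. (\<integral>\<omega>. inner v (Z \<omega>) \<partial>M) = 0"
  shows "(\<integral>\<omega>. inner (X \<omega>) (Z \<omega>) \<partial>M) = 0"
proof -
  have [measurable]: "X \<in> borel_measurable M" "Z \<in> borel_measurable M"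
    using ind indep_var_rv1 indep_var_rv2 by auto
  define P where "P = distr M borel X"
  define Q where "Q = distr M borel Z"
  interpret P: prob_space P unfolding P_def by (rule prob_space_distr) measurable
  interpret Q: prob_space Q unfolding Q_def by (rule prob_space_distr) measurable
  interpret PQ: pair_sigma_finite P Q ..
  define g where "g = (\<lambda>(x::'b, z::'b). inner x z)"
  have [measurable]: "g \<in> borel_measurable (borel \<Otimes>\<^sub>M borel)"
    unfolding g_def by measurable
  have XZ[measurable]: "(\<lambda>\<omega>. (X \<omega>, Z \<omega>)) \<in> measurable M (borel \<Otimes>\<^sub>M borel)"
    by measurable
  \<comment> \<open>Independence makes the joint law the product law, so Fubini reduces to the mean of Z.\<close>
  have joint: "distr M (borel \<Otimes>\<^sub>M borel) (\<lambda>\<omega>. (X \<omega>, Z \<omega>)) = P \<Otimes>\<^sub>M Q"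
    using ind unfolding indep_var_distribution_eq P_def Q_def by simp
  have "integrable M (\<lambda>\<omega>. inner (X \<omega>) (Z \<omega>))"
    using sq by (intro integrable_inner_if_square_integrable) measurable
  then have int: "integrable (P \<Otimes>\<^sub>M Q) g"
    using integrable_distr_eq[OF XZ, of g] unfolding joint by (simp add: g_def)
  have inner_0: "(\<integral>z. g (x, z) \<partial>Q) = 0" for x
  proof -
    have "(\<integral>z. g (x, z) \<partial>Q) = (\<integral>\<omega>. inner x (Z \<omega>) \<partial>M)"
      unfolding Q_def g_def by (simp add: integral_distr)
    then show ?thesis
      using mean by simp
  qed
  have "(\<integral>\<omega>. inner (X \<omega>) (Z \<omega>) \<partial>M) = integral\<^sup>L (P \<Otimes>\<^sub>M Q) g"
    using integral_distr[OF XZ, of g] unfolding joint by (simp add: g_def)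
  also have "\<dots> = 0"
    using PQ.integral_fst'[OF int] inner_0 by simp
  finally show ?thesis .
qed

lemma (in prob_space) integral_norm_sum_squared_indep:
  fixes X :: "'i \<Rightarrow> 'a \<Rightarrow> 'b::{real_inner, complete_space, second_countable_topology}"
  assumes "finite I" and ind: "indep_vars (\<lambda>_. borel) X I"
    and sq: "\<And>i. i \<in> I \<Longrightarrow> integrable M (\<lambda>\<omega>. (norm (X i \<omega>))\<^sup>2)"
    and mean: "\<And>i v. i \<in> I \<Longrightarrow> (\<integral>\<omega>. inner v (X i \<omega>) \<partial>M) = 0"
  shows "integrable M (\<lambda>\<omega>. (norm (\<Sum>i\<in>I. X i \<omega>))\<^sup>2)"
    and "(\<integral>\<omega>. (norm (\<Sum>i\<in>I. X i \<omega>))\<^sup>2 \<partial>M) = (\<Sum>i\<in>I. \<integral>\<omega>. (norm (X i \<omega>))\<^sup>2 \<partial>M)"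
proof -
  have meas: "X i \<in> borel_measurable M" if "i \<in> I" for i
    using ind that unfolding indep_vars_def by simp
  have expand: "(norm (\<Sum>i\<in>I. X i \<omega>))\<^sup>2 = (\<Sum>i\<in>I. \<Sum>j\<in>I. inner (X i \<omega>) (X j \<omega>))" for \<omega>
    unfolding power2_norm_eq_inner inner_sum_left by (simp only: inner_sum_right)
  have int_ij: "integrable M (\<lambda>\<omega>. inner (X i \<omega>) (X j \<omega>))" if "i \<in> I" "j \<in> I" for i j
    using that by (intro integrable_inner_if_square_integrable meas sq)
  have orth: "(\<integral>\<omega>. inner (X i \<omega>) (X j \<omega>) \<partial>M) =
      (if i = j then \<integral>\<omega>. (norm (X i \<omega>))\<^sup>2 \<partial>M else 0)" if "i \<in> I" "j \<in> I" for i j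
    using that by (auto simp: power2_norm_eq_inner
        intro!: integral_inner_indep_eq_0 indep_vars_imp_indep_var[OF ind] sq mean)
  show "integrable M (\<lambda>\<omega>. (norm (\<Sum>i\<in>I. X i \<omega>))\<^sup>2)"
    unfolding expand using int_ij by auto
  have "(\<integral>\<omega>. (norm (\<Sum>i\<in>I. X i \<omega>))\<^sup>2 \<partial>M)
      = (\<Sum>i\<in>I. \<Sum>j\<in>I. \<integral>\<omega>. inner (X i \<omega>) (X j \<omega>) \<partial>M)"
    unfolding expand using int_ij
    by (subst Bochner_Integration.integral_sum) (auto intro!: sum.cong Bochner_Integration.integral_sum)
  also have "\<dots> = (\<Sum>i\<in>I. \<integral>\<omega>. (norm (X i \<omega>))\<^sup>2 \<partial>M)"
    using \<open>finite I\<close> by (simp add: orth if_distrib cong: sum.cong)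
  finally show "(\<integral>\<omega>. (norm (\<Sum>i\<in>I. X i \<omega>))\<^sup>2 \<partial>M) = (\<Sum>i\<in>I. \<integral>\<omega>. (norm (X i \<omega>))\<^sup>2 \<partial>M)" .
qed

lemma (in finite_measure) integrable_norm_diff_squared:
  fixes X :: "'a \<Rightarrow> 'b::{real_normed_vector, second_countable_topology}"
  assumes [measurable]: "X \<in> borel_measurable M"
    and "integrable M (\<lambda>\<omega>. (norm (X \<omega>))\<^sup>2)"
  shows "integrable M (\<lambda>\<omega>. (norm (X \<omega> - c))\<^sup>2)"
proof (rule Bochner_Integration.integrable_bound)
  show "integrable M (\<lambda>\<omega>. 2 * (norm (X \<omega>))\<^sup>2 + 2 * (norm (- c))\<^sup>2)"
    using assms by (intro Bochner_Integration.integrable_add) auto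
  show "AE \<omega> in M. norm ((norm (X \<omega> - c))\<^sup>2) \<le> norm (2 * (norm (X \<omega>))\<^sup>2 + 2 * (norm (- c))\<^sup>2)"
    using norm_add_squared_le[of "X _" "- c"] by (intro AE_I2) simp
qed measurable

lemma (in prob_space) sample_mean_mean_square_error:
  fixes Y :: "nat \<Rightarrow> 'a \<Rightarrow> 'b::{real_inner, complete_space, second_countable_topology}"
  assumes meas[measurable]: "\<And>i. Y i \<in> borel_measurable M"
    and ind: "indep_vars (\<lambda>_. borel) Y UNIV"
    and dist: "\<And>i. distr M borel (Y i) = distr M borel (Y 0)"
    and int: "integrable M (Y 0)" and mean: "(\<integral>\<omega>. Y 0 \<omega> \<partial>M) = c"
    and sq: "integrable M (\<lambda>\<omega>. (norm (Y 0 \<omega> - c))\<^sup>2)"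
    and "n > 0"
  shows "integrable M (\<lambda>\<omega>. (norm ((1 / real n) *\<^sub>R (\<Sum>i<n. Y i \<omega>) - c))\<^sup>2)"
    and "(\<integral>\<omega>. (norm ((1 / real n) *\<^sub>R (\<Sum>i<n. Y i \<omega>) - c))\<^sup>2 \<partial>M)
           = (\<integral>\<omega>. (norm (Y 0 \<omega> - c))\<^sup>2 \<partial>M) / real n"
proof -
  define X where "X i \<omega> = Y i \<omega> - c" for i \<omega>
  have ind_X: "indep_vars (\<lambda>_. borel) X {..<n}"
    unfolding X_def
    by (rule indep_vars_compose2[OF indep_vars_subset[OF ind]]) auto
  have mean_X: "(\<integral>\<omega>. inner v (X i \<omega>) \<partial>M) = 0" for i v
  proof -
    have "(\<integral>\<omega>. inner v (X i \<omega>) \<partial>M) = (\<integral>\<omega>. inner v (Y 0 \<omega> - c) \<partial>M)"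
      using identically_distributed_integral_eq[OF meas meas dist, of "\<lambda>y. inner v (y - c)"]
      by (simp add: X_def)
    also have "\<dots> = (\<integral>\<omega>. inner v (Y 0 \<omega>) \<partial>M) - inner v c"
      using int by (simp add: inner_diff_right prob_space)
    also have "\<dots> = 0"
      using int mean by simp
    finally show ?thesis .
  qed
  have sq_X: "integrable M (\<lambda>\<omega>. (norm (X i \<omega>))\<^sup>2)" for i
    using identically_distributed_integrable_iff[OF meas meas dist, of "\<lambda>y. (norm (y - c))\<^sup>2"] sq
    by (simp add: X_def)
  have var_X: "(\<integral>\<omega>. (norm (X i \<omega>))\<^sup>2 \<partial>M) = (\<integral>\<omega>. (norm (Y 0 \<omega> - c))\<^sup>2 \<partial>M)" for i
    using identically_distributed_integral_eq[OF meas meas dist, of "\<lambda>y. (norm (y - c))\<^sup>2"]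
    by (simp add: X_def)
  have centred: "(norm ((1 / real n) *\<^sub>R (\<Sum>i<n. Y i \<omega>) - c))\<^sup>2
      = (1 / real n)\<^sup>2 * (norm (\<Sum>i<n. X i \<omega>))\<^sup>2" for \<omega>
  proof -
    have "(1 / real n) *\<^sub>R (\<Sum>i<n. Y i \<omega>) - c = (1 / real n) *\<^sub>R (\<Sum>i<n. X i \<omega>)"
      using \<open>n > 0\<close> by (simp add: X_def sum_subtractf scaleR_diff_right sum_constant_scaleR)
    then show ?thesis
      by (simp add: power_divide)
  qed
  note bienayme = integral_norm_sum_squared_indep[OF _ ind_X sq_X mean_X]
  show "integrable M (\<lambda>\<omega>. (norm ((1 / real n) *\<^sub>R (\<Sum>i<n. Y i \<omega>) - c))\<^sup>2)"
    unfolding centred using bienayme(1) by simp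
  show "(\<integral>\<omega>. (norm ((1 / real n) *\<^sub>R (\<Sum>i<n. Y i \<omega>) - c))\<^sup>2 \<partial>M)
           = (\<integral>\<omega>. (norm (Y 0 \<omega> - c))\<^sup>2 \<partial>M) / real n"
    unfolding centred using bienayme(2) \<open>n > 0\<close> by (simp add: var_X) (simp add: power2_eq_square)
qed

lemma (in prob_space) nn_integral_norm_blinfun_diff_squared_le:
  fixes T :: "'b::real_normed_vector \<Rightarrow>\<^sub>L 'c::real_normed_vector"
  assumes "integrable M (\<lambda>\<omega>. (norm (Z \<omega> - z))\<^sup>2)"
  shows "(\<integral>\<^sup>+\<omega>. ennreal ((norm (T (Z \<omega>) - x))\<^sup>2) \<partial>M)
           \<le> ennreal (2 * (norm T)\<^sup>2 * (\<integral>\<omega>. (norm (Z \<omega> - z))\<^sup>2 \<partial>M) + 2 * (norm (T z - x))\<^sup>2)"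
proof -
  have pointwise: "(norm (T (Z \<omega>) - x))\<^sup>2 \<le> 2 * (norm T)\<^sup>2 * (norm (Z \<omega> - z))\<^sup>2 + 2 * (norm (T z - x))\<^sup>2"
    for \<omega>
  proof -
    have "T (Z \<omega>) - x = T (Z \<omega> - z) + (T z - x)"
      by (simp add: blinfun.diff_right)
    then have "(norm (T (Z \<omega>) - x))\<^sup>2 \<le> 2 * (norm (T (Z \<omega> - z)))\<^sup>2 + 2 * (norm (T z - x))\<^sup>2"
      using norm_add_squared_le by metis
    moreover have "(norm (T (Z \<omega> - z)))\<^sup>2 \<le> (norm T * norm (Z \<omega> - z))\<^sup>2"
      by (intro power_mono norm_blinfun) simp
    ultimately show ?thesis
      by (simp add: power_mult_distrib)
  qed
  have "(\<integral>\<^sup>+\<omega>. ennreal ((norm (T (Z \<omega>) - x))\<^sup>2) \<partial>M)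
      \<le> (\<integral>\<^sup>+\<omega>. ennreal (2 * (norm T)\<^sup>2 * (norm (Z \<omega> - z))\<^sup>2 + 2 * (norm (T z - x))\<^sup>2) \<partial>M)"
    by (intro nn_integral_mono ennreal_leI pointwise)
  also have "\<dots> = ennreal (\<integral>\<omega>. 2 * (norm T)\<^sup>2 * (norm (Z \<omega> - z))\<^sup>2 + 2 * (norm (T z - x))\<^sup>2 \<partial>M)"
    using assms by (intro nn_integral_eq_integral) auto
  also have "\<dots> = ennreal (2 * (norm T)\<^sup>2 * (\<integral>\<omega>. (norm (Z \<omega> - z))\<^sup>2 \<partial>M) + 2 * (norm (T z - x))\<^sup>2)"
    using assms by (simp add: prob_space)
  finally show ?thesis .
qed

lemma (in prob_space) nn_integral_regularised_sample_mean_error_le: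
  fixes Y :: "nat \<Rightarrow> 'a \<Rightarrow> 'b::{real_inner, complete_space, second_countable_topology}"
    and T :: "'b \<Rightarrow>\<^sub>L 'c::real_normed_vector"
  assumes "\<And>i. Y i \<in> borel_measurable M"
    and "indep_vars (\<lambda>_. borel) Y UNIV"
    and "\<And>i. distr M borel (Y i) = distr M borel (Y 0)"
    and "integrable M (Y 0)" and "(\<integral>\<omega>. Y 0 \<omega> \<partial>M) = c"
    and "integrable M (\<lambda>\<omega>. (norm (Y 0 \<omega> - c))\<^sup>2)"
    and "n > 0"
  shows "(\<integral>\<^sup>+\<omega>. ennreal ((norm (T ((1 / real n) *\<^sub>R (\<Sum>i<n. Y i \<omega>)) - x))\<^sup>2) \<partial>M)
           \<le> ennreal (2 * (norm T)\<^sup>2 * ((\<integral>\<omega>. (norm (Y 0 \<omega> - c))\<^sup>2 \<partial>M) / real n)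
                      + 2 * (norm (T c - x))\<^sup>2)"
  using nn_integral_norm_blinfun_diff_squared_le[OF sample_mean_mean_square_error(1)[OF assms]]
    sample_mean_mean_square_error(2)[OF assms]
  by simp

lemma regularisation_parameter_choice_tendsto:
  fixes alpha :: "real \<Rightarrow> real"
  assumes "is_regularisation K R" "y \<in> mp_dom K"
    and "\<And>\<delta>. \<delta> > 0 \<Longrightarrow> alpha \<delta> > 0" "(alpha \<longlongrightarrow> 0) (at_right 0)"
  shows "((\<lambda>\<delta>. R (alpha \<delta>) y) \<longlongrightarrow> mp_inv K y) (at_right 0)"
proof -
  have "eventually (\<lambda>\<delta>. alpha \<delta> > 0) (at_right 0)"
    using eventually_at_right_less[of "0::real"] by (rule eventually_mono) (rule assms(3))
  then have "filterlim alpha (at_right 0) (at_right 0)"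
    unfolding filterlim_at using assms(4) by (auto elim!: eventually_mono)
  moreover have "((\<lambda>a. R a y) \<longlongrightarrow> mp_inv K y) (at_right 0)"
    using assms(1,2) unfolding is_regularisation_def by blast
  ultimately show ?thesis
    by (rule filterlim_compose[rotated])
qed

lemma inverse_sqrt_at_right_0: "filterlim (\<lambda>n::nat. 1 / sqrt (real n)) (at_right 0) sequentially"
proof -
  have "((\<lambda>n::nat. 1 / sqrt (real n)) \<longlongrightarrow> 0) sequentially"
    by real_asymp
  moreover have "eventually (\<lambda>n::nat. 1 / sqrt (real n) > 0) sequentially"
    using eventually_gt_at_top[of 0] by eventually_elim simp
  ultimately show ?thesis
    unfolding filterlim_at by (auto elim: eventually_mono)
qed

lemma ennreal_tendsto_0_if_eventually_le:
  assumes "eventually (\<lambda>n. f n \<le> ennreal (g n)) F" and "(g \<longlongrightarrow> 0) F"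
  shows "(f \<longlongrightarrow> 0) F"
proof (rule tendsto_sandwich[OF _ assms(1) tendsto_const])
  show "((\<lambda>n. ennreal (g n)) \<longlongrightarrow> 0) F"
    using tendsto_ennrealI[OF assms(2)] by simp
qed simp

theorem theorem1:
  fixes M :: "'w measure"
    and K :: "'a::{real_inner, complete_space, second_countable_topology} \<Rightarrow>\<^sub>L
              'b::{real_inner, complete_space, second_countable_topology}"
    and Y :: "nat \<Rightarrow> 'w \<Rightarrow> 'b"
    and yhat :: 'b
    and R :: "real \<Rightarrow> ('b \<Rightarrow>\<^sub>L 'a)"
    and alpha :: "real \<Rightarrow> real"
  assumes "prob_space M"
    and "compact_op K"
    and "\<And>i. Y i \<in> borel_measurable M"
    and "prob_space.indep_vars M (\<lambda>_. borel) Y UNIV"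
    and "\<And>i. distr M borel (Y i) = distr M borel (Y 0)"
    and "integrable M (Y 0)"
    and "(\<integral>\<omega>. Y 0 \<omega> \<partial>M) = yhat"
    and "yhat \<in> mp_dom K"
    and "0 < (\<integral>\<^sup>+\<omega>. ennreal ((norm (Y 0 \<omega>))\<^sup>2) \<partial>M)"
    and "(\<integral>\<^sup>+\<omega>. ennreal ((norm (Y 0 \<omega>))\<^sup>2) \<partial>M) < \<infinity>"
    and "is_regularisation K R"
    and "\<And>\<delta>. \<delta> > 0 \<Longrightarrow> alpha \<delta> > 0"
    and "(alpha \<longlongrightarrow> 0) (at_right 0)"
    and "((\<lambda>\<delta>. norm (R (alpha \<delta>)) * \<delta>) \<longlongrightarrow> 0) (at_right 0)"
  shows "(\<lambda>n. \<integral>\<^sup>+\<omega>. ennreal ((norm (blinfun_apply (R (alpha (1 / sqrt (real n))))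
                ((1 / real n) *\<^sub>R (\<Sum>i<n. Y i \<omega>)) - mp_inv K yhat))\<^sup>2) \<partial>M)
         \<longlonglongrightarrow> 0"
proof -
  interpret prob_space M by (rule assms(1))
  define T where "T n = R (alpha (1 / sqrt (real n)))" for n :: nat
  define \<sigma>2 where "\<sigma>2 = (\<integral>\<omega>. (norm (Y 0 \<omega> - yhat))\<^sup>2 \<partial>M)"
  have "integrable M (\<lambda>\<omega>. (norm (Y 0 \<omega>))\<^sup>2)"
    using assms(3,10) by (simp add: integrable_iff_bounded)
  then have sq: "integrable M (\<lambda>\<omega>. (norm (Y 0 \<omega> - yhat))\<^sup>2)"
    using assms(3) by (intro integrable_norm_diff_squared)
  have variance_term: "(\<lambda>n. norm (T n) * (1 / sqrt (real n))) \<longlonglongrightarrow> 0"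
    unfolding T_def using filterlim_compose[OF assms(14) inverse_sqrt_at_right_0] by simp
  have bias_term: "(\<lambda>n. T n yhat) \<longlonglongrightarrow> mp_inv K yhat"
    unfolding T_def
    using filterlim_compose[OF regularisation_parameter_choice_tendsto[OF assms(11,8,12,13)]
        inverse_sqrt_at_right_0]
    by simp
  have "(\<lambda>n. 2 * \<sigma>2 * (norm (T n) * (1 / sqrt (real n)))\<^sup>2 + 2 * (norm (T n yhat - mp_inv K yhat))\<^sup>2)
      \<longlonglongrightarrow> 2 * \<sigma>2 * 0\<^sup>2 + 2 * (norm (mp_inv K yhat - mp_inv K yhat))\<^sup>2"
    by (intro tendsto_intros variance_term bias_term)
  moreover have "\<forall>\<^sub>F n in sequentially.
      (\<integral>\<^sup>+\<omega>. ennreal ((norm (T n ((1 / real n) *\<^sub>R (\<Sum>i<n. Y i \<omega>)) - mp_inv K yhat))\<^sup>2) \<partial>M)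
      \<le> ennreal (2 * \<sigma>2 * (norm (T n) * (1 / sqrt (real n)))\<^sup>2 + 2 * (norm (T n yhat - mp_inv K yhat))\<^sup>2)"
    (is "\<forall>\<^sub>F n in sequentially. ?error n \<le> ennreal (?bound n)")
    using eventually_gt_at_top[of 0]
  proof (rule eventually_mono)
    fix n :: nat
    assume "n > 0"
    from nn_integral_regularised_sample_mean_error_le[OF assms(3-7) sq this]
    show "?error n \<le> ennreal (?bound n)"
      by (simp add: \<sigma>2_def power_mult_distrib power_divide mult_ac)
  qed
  ultimately show ?thesis
    unfolding T_def by (intro ennreal_tendsto_0_if_eventually_le) simp_all
qed

end
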